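(* With notation as in the context (type $E_7$), let $s\in\{1,3,4,5,6,7\}$ and let $\beta\neq\beta'$ be elements of $\Delta_s^+$. Then $(f(\beta)|f(\beta'))=0$ if and only if $f(\beta)$ and $f(\beta')$ agree in exactly one of their three coordinates. In particular, $\langle\beta,\beta'\rangle=0$ if and only if $f(\beta)$ and $f(\beta')$ agree in exactly one coordinate.
   Context: Let $F=\{0,1,2,3\}$ be the group $\mathbb{Z}/2\times\mathbb{Z}/2$ with operation $\oplus$ (binary addition without carry) and symplectic form $(a|a')=0$ if $a=0$, $a'=0$ or $a=a'$, and $1$ otherwise. Let $V=F^3$ (elements written $abc$), with coordinatewise $\oplus$ and form $(abc|a'b'c')=(a|a')+(b|b')+(c|c')\in\mathbb{Z}/2$. Let $\Delta$ be the $E_7$ root system with simple roots $\alpha_1,\dots,\alpha_7$, $\langle\alpha_i,\alpha_i\rangle=2$, $\langle\alpha_i,\alpha_j\rangle=-1$ for $\{i,j\}\in\{\{1,3\},\{3,4\},\{4,5\},\{5,6\},\{6,7\},\{2,4\}\}$, $0$ otherwise; $\Lambda=\bigoplus\mathbb{Z}\alpha_i$, $\Delta^+$ the positive roots. Let $f:\Lambda\to V$ be the homomorphism with $f(\alpha_1)=100$, $f(\alpha_2)=030$, $f(\alpha_3)=300$, $f(\alpha_4)=111$, $f(\alpha_5)=003$, $f(\alpha_6)=001$, $f(\alpha_7)=033$. For $\beta=\sum\beta^i\alpha_i\in\Delta^+$ let $m(\beta)=\max\{i:\beta^i\ne0\}$. The strata are $\Delta_1^+=\{\alpha_1\}$,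 $\Delta_3^+=\{\beta\in\Delta^+: m(\beta)\in\{2,3\}\}$, and $\Delta_s^+=\{\beta\in\Delta^+: m(\beta)=s\}$ for $s=4,5,6,7$. *)

theory Defs
  imports Main
begin

text \<open>Elements of F are the naturals 0,1,2,3; the group law is bitwise xor.
  Elements of V are lists of length 3 over F.\<close>

definition formF :: "nat \<Rightarrow> nat \<Rightarrow> nat" where
  "formF a a' = (if a = 0 \<or> a' = 0 \<or> a = a' then 0 else 1)"

definition addV :: "nat list \<Rightarrow> nat list \<Rightarrow> nat list" where
  "addV v w = map2 xor v w"

definition zeroV :: "nat list" where
  "zeroV = [0, 0, 0]"

definition formV :: "nat list \<Rightarrow> nat list \<Rightarrow> nat" where
  "formV v w = (\<Sum>k<3. formF (v ! k) (w ! k)) mod 2"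

definition agree_exactly_one :: "nat list \<Rightarrow> nat list \<Rightarrow> bool" where
  "agree_exactly_one v w \<longleftrightarrow> card {k. k < 3 \<and> v ! k = w ! k} = 1"

text \<open>Elements of \<Lambda> are coefficient vectors \<beta> :: nat \<Rightarrow> int, \<beta> i = \<beta>^i,
  supported on {1..7}.\<close>

definition e7_edge :: "nat \<Rightarrow> nat \<Rightarrow> bool" where
  "e7_edge i j \<longleftrightarrow> {i, j} \<in> {{1,3},{3,4},{4,5},{5,6},{6,7},{2,4}}"

definition cartan :: "nat \<Rightarrow> nat \<Rightarrow> int" where
  "cartan i j = (if i = j then 2 else if e7_edge i j then -1 else 0)"

definition bil :: "(nat \<Rightarrow> int) \<Rightarrow> (nat \<Rightarrow> int) \<Rightarrow> int" where
  "bil \<beta> \<gamma> = (\<Sum>i\<in>{1..7}. \<Sum>j\<in>{1..7}. \<beta> i * \<gamma> j * cartan i j)"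

definition simple_root :: "nat \<Rightarrow> (nat \<Rightarrow> int)" where
  "simple_root i = (\<lambda>j. if j = i then 1 else 0)"

definition refl :: "nat \<Rightarrow> (nat \<Rightarrow> int) \<Rightarrow> (nat \<Rightarrow> int)" where
  "refl i \<beta> = (\<lambda>j. \<beta> j - bil \<beta> (simple_root i) * simple_root i j)"

inductive_set roots :: "(nat \<Rightarrow> int) set" where
  simple: "i \<in> {1..7} \<Longrightarrow> simple_root i \<in> roots"
| reflect: "\<beta> \<in> roots \<Longrightarrow> i \<in> {1..7} \<Longrightarrow> refl i \<beta> \<in> roots"

definition pos_roots :: "(nat \<Rightarrow> int) set" where
  "pos_roots = {\<beta> \<in> roots. \<forall>i. \<beta> i \<ge> 0}"

definition f_simple :: "nat \<Rightarrow> nat list" where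
  "f_simple i = (if i = 1 then [1,0,0] else if i = 2 then [0,3,0] else
                 if i = 3 then [3,0,0] else if i = 4 then [1,1,1] else
                 if i = 5 then [0,0,3] else if i = 6 then [0,0,1] else
                 if i = 7 then [0,3,3] else zeroV)"

text \<open>Since V has exponent 2, f(\<Sum> \<beta>^i \<alpha>_i) is the sum of the f(\<alpha>_i) with \<beta>^i odd.\<close>
definition fmap :: "(nat \<Rightarrow> int) \<Rightarrow> nat list" where
  "fmap \<beta> = foldr (\<lambda>i acc. if odd (\<beta> i) then addV (f_simple i) acc else acc) [1..<8] zeroV"

definition mdeg :: "(nat \<Rightarrow> int) \<Rightarrow> nat" where
  "mdeg \<beta> = Max {i \<in> {1..7}. \<beta> i \<noteq> 0}"

definition stratum :: "nat \<Rightarrow> (nat \<Rightarrow> int) set" where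
  "stratum s = (if s = 1 then {simple_root 1}
                else if s = 3 then {\<beta> \<in> pos_roots. mdeg \<beta> \<in> {2, 3}}
                else {\<beta> \<in> pos_roots. mdeg \<beta> = s})"

end

theory Submission
  imports Defs
begin

(* The simple reflection s_i sends \<alpha>_i to -\<alpha>_i and permutes the other positive roots.
   Hence an explicit list of 63 positive roots that is closed under this rule contains, up to
   sign, every element of the Weyl orbit of the simple roots, and in particular every positive
   root. The statement is then a finite check over pairs of listed roots of equal stratum. *)

definition lattice_vec :: "int list \<Rightarrow> nat \<Rightarrow> int" where
  "lattice_vec l j = (if j \<in> {1..7} then l ! (j - 1) else 0)"

fun cartan_form :: "int list \<Rightarrow> int list \<Rightarrow> int" where
  "cartan_form [a1, a2, a3, a4, a5, a6, a7] [b1, b2, b3, b4, b5, b6, b7] =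
     2 * (a1 * b1 + a2 * b2 + a3 * b3 + a4 * b4 + a5 * b5 + a6 * b6 + a7 * b7)
     - (a1 * b3 + a3 * b1 + a2 * b4 + a4 * b2 + a3 * b4 + a4 * b3
        + a4 * b5 + a5 * b4 + a5 * b6 + a6 * b5 + a6 * b7 + a7 * b6)"
| "cartan_form _ _ = 0"

fun reflect_list :: "nat \<Rightarrow> int list \<Rightarrow> int list" where
  "reflect_list i [a1, a2, a3, a4, a5, a6, a7] =
     (if i = 1 then [a3 - a1, a2, a3, a4, a5, a6, a7]
      else if i = 2 then [a1, a4 - a2, a3, a4, a5, a6, a7]
      else if i = 3 then [a1, a2, a1 + a4 - a3, a4, a5, a6, a7]
      else if i = 4 then [a1, a2, a3, a2 + a3 + a5 - a4, a5, a6, a7]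
      else if i = 5 then [a1, a2, a3, a4, a4 + a6 - a5, a6, a7]
      else if i = 6 then [a1, a2, a3, a4, a5, a5 + a7 - a6, a7]
      else if i = 7 then [a1, a2, a3, a4, a5, a6, a6 - a7]
      else [a1, a2, a3, a4, a5, a6, a7])"
| "reflect_list i l = l"

definition simple_list :: "nat \<Rightarrow> int list" where
  "simple_list i = map (\<lambda>j. if j = i then 1 else 0) [1..<8]"

lemma length_eq_7_cases:
  assumes "length l = 7"
  obtains a1 a2 a3 a4 a5 a6 a7 where "l = [a1, a2, a3, a4, a5, a6, a7]"
  using assms by (auto simp: numeral_eq_Suc length_Suc_conv)

lemma atLeastAtMost_1_7: "{1..7::nat} = {1, 2, 3, 4, 5, 6, 7}"
  by auto

lemma bil_lattice_vec:
  assumes "length a = 7" and "length b = 7"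
  shows "bil (lattice_vec a) (lattice_vec b) = cartan_form a b"
proof -
  obtain a1 a2 a3 a4 a5 a6 a7 where a: "a = [a1, a2, a3, a4, a5, a6, a7]"
    using assms(1) by (rule length_eq_7_cases)
  obtain b1 b2 b3 b4 b5 b6 b7 where b: "b = [b1, b2, b3, b4, b5, b6, b7]"
    using assms(2) by (rule length_eq_7_cases)
  show ?thesis
    unfolding bil_def atLeastAtMost_1_7 a b
    by (simp add: cartan_def e7_edge_def doubleton_eq_iff lattice_vec_def algebra_simps)
qed

lemma simple_root_eq_lattice_vec:
  "i \<in> {1..7} \<Longrightarrow> simple_root i = lattice_vec (simple_list i)"
  by (auto simp: simple_root_def lattice_vec_def simple_list_def fun_eq_iff)

lemma refl_lattice_vec:
  assumes "i \<in> {1..7}" and "length l = 7"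
  shows "refl i (lattice_vec l) = lattice_vec (reflect_list i l)"
proof -
  obtain a1 a2 a3 a4 a5 a6 a7 where l: "l = [a1, a2, a3, a4, a5, a6, a7]"
    using assms(2) by (rule length_eq_7_cases)
  have "i = 1 \<or> i = 2 \<or> i = 3 \<or> i = 4 \<or> i = 5 \<or> i = 6 \<or> i = 7"
    using assms(1) by auto
  then show ?thesis
    unfolding refl_def simple_root_eq_lattice_vec[OF assms(1)]
    by (auto simp: bil_lattice_vec l simple_list_def upt_rec lattice_vec_def nth_Cons'
        fun_eq_iff algebra_simps)
qed

lemma refl_simple_root:
  assumes "i \<in> {1..7}"
  shows "refl i (simple_root i) = - simple_root i"
proof -
  have "i = 1 \<or> i = 2 \<or> i = 3 \<or> i = 4 \<or> i = 5 \<or> i = 6 \<or> i = 7"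
    using assms by auto
  then have "bil (simple_root i) (simple_root i) = 2"
    unfolding simple_root_eq_lattice_vec[OF assms]
    by (auto simp: bil_lattice_vec simple_list_def upt_rec)
  then show ?thesis
    by (simp add: refl_def fun_eq_iff)
qed

lemma bil_uminus_left: "bil (- \<beta>) \<gamma> = - bil \<beta> \<gamma>"
  by (simp add: bil_def sum_negf)

lemma refl_uminus: "refl i (- \<beta>) = - refl i \<beta>"
  by (simp add: refl_def bil_uminus_left fun_eq_iff algebra_simps)

definition E7_pos_root_list :: "int list list" where
  "E7_pos_root_list =
   [[0,0,0,0,0,0,1],
    [0,0,0,0,0,1,0],
    [0,0,0,0,1,0,0],
    [0,0,0,1,0,0,0],
    [0,0,1,0,0,0,0],
    [0,1,0,0,0,0,0],
    [1,0,0,0,0,0,0],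
    [0,0,0,0,0,1,1],
    [0,0,0,0,1,1,0],
    [0,0,0,1,1,0,0],
    [0,0,1,1,0,0,0],
    [0,1,0,1,0,0,0],
    [1,0,1,0,0,0,0],
    [0,0,0,0,1,1,1],
    [0,0,0,1,1,1,0],
    [0,0,1,1,1,0,0],
    [0,1,0,1,1,0,0],
    [0,1,1,1,0,0,0],
    [1,0,1,1,0,0,0],
    [0,0,0,1,1,1,1],
    [0,0,1,1,1,1,0],
    [0,1,0,1,1,1,0],
    [0,1,1,1,1,0,0],
    [1,0,1,1,1,0,0],
    [1,1,1,1,0,0,0],
    [0,0,1,1,1,1,1],
    [0,1,0,1,1,1,1],
    [0,1,1,1,1,1,0],
    [0,1,1,2,1,0,0],
    [1,0,1,1,1,1,0],
    [1,1,1,1,1,0,0],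
    [0,1,1,1,1,1,1],
    [0,1,1,2,1,1,0],
    [1,0,1,1,1,1,1],
    [1,1,1,1,1,1,0],
    [1,1,1,2,1,0,0],
    [0,1,1,2,1,1,1],
    [0,1,1,2,2,1,0],
    [1,1,1,1,1,1,1],
    [1,1,1,2,1,1,0],
    [1,1,2,2,1,0,0],
    [0,1,1,2,2,1,1],
    [1,1,1,2,1,1,1],
    [1,1,1,2,2,1,0],
    [1,1,2,2,1,1,0],
    [0,1,1,2,2,2,1],
    [1,1,1,2,2,1,1],
    [1,1,2,2,1,1,1],
    [1,1,2,2,2,1,0],
    [1,1,1,2,2,2,1],
    [1,1,2,2,2,1,1],
    [1,1,2,3,2,1,0],
    [1,1,2,2,2,2,1],
    [1,1,2,3,2,1,1],
    [1,2,2,3,2,1,0],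
    [1,1,2,3,2,2,1],
    [1,2,2,3,2,1,1],
    [1,1,2,3,3,2,1],
    [1,2,2,3,2,2,1],
    [1,2,2,3,3,2,1],
    [1,2,2,4,3,2,1],
    [1,2,3,4,3,2,1],
    [2,2,3,4,3,2,1]]"

lemma E7_pos_root_list_length: "\<forall>l\<in>set E7_pos_root_list. length l = 7"
  by code_simp

lemma E7_pos_root_list_has_pos_entry: "\<forall>l\<in>set E7_pos_root_list. list_ex (\<lambda>x. 0 < x) l"
  by code_simp

lemma simple_list_in_E7_pos_root_list: "\<forall>i\<in>set [1..<8]. simple_list i \<in> set E7_pos_root_list"
  by code_simp

lemma E7_pos_root_list_reflect_closed:
  "\<forall>l\<in>set E7_pos_root_list. \<forall>i\<in>set [1..<8].
     l = simple_list i \<or> reflect_list i l \<in> set E7_pos_root_list"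
  by code_simp

lemma root_in_E7_pos_root_list_up_to_sign:
  assumes "\<beta> \<in> roots"
  shows "\<exists>l\<in>set E7_pos_root_list. \<beta> = lattice_vec l \<or> \<beta> = - lattice_vec l"
  using assms
proof (induction rule: roots.induct)
  case (simple i)
  then show ?case
    using simple_list_in_E7_pos_root_list simple_root_eq_lattice_vec by auto
next
  case (reflect \<beta> i)
  then obtain l where l: "l \<in> set E7_pos_root_list" and "\<beta> = lattice_vec l \<or> \<beta> = - lattice_vec l"
    by blast
  then have \<beta>: "refl i \<beta> = refl i (lattice_vec l) \<or> refl i \<beta> = - refl i (lattice_vec l)"
    by (auto simp: refl_uminus)
  have i: "i \<in> set [1..<8]"
    using reflect.hyps(2) by auto
  have refl_l: "refl i (lattice_vec l) = lattice_vec (reflect_list i l)"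
    using refl_lattice_vec reflect.hyps(2) l E7_pos_root_list_length by blast
  consider "l = simple_list i" | "reflect_list i l \<in> set E7_pos_root_list"
    using E7_pos_root_list_reflect_closed l i by blast
  then show ?case
  proof cases
    case 1
    then have "lattice_vec l = simple_root i"
      using reflect.hyps(2) simple_root_eq_lattice_vec by simp
    then have "refl i (lattice_vec l) = - lattice_vec l"
      using refl_simple_root reflect.hyps(2) by simp
    then show ?thesis
      using \<beta> l by auto
  next
    case 2
    then show ?thesis
      using \<beta> refl_l by auto
  qed
qed

lemma pos_root_in_E7_pos_root_list_up_to_sign:
  assumes "\<beta> \<in> pos_roots"
  obtains l where "l \<in> set E7_pos_root_list" and "\<beta> = lattice_vec l"
proof -
  obtain l where l: "l \<in> set E7_pos_root_list" and "\<beta> = lattice_vec l \<or> \<beta> = - lattice_vec l"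
    using assms root_in_E7_pos_root_list_up_to_sign by (auto simp: pos_roots_def)
  moreover have "\<beta> \<noteq> - lattice_vec l"
  proof
    assume neg: "\<beta> = - lattice_vec l"
    obtain k where "k < length l" and "0 < l ! k"
      using l E7_pos_root_list_has_pos_entry by (auto simp: list_ex_length)
    moreover have "length l = 7"
      using l E7_pos_root_list_length by blast
    ultimately have "\<beta> (Suc k) < 0"
      by (simp add: neg lattice_vec_def)
    then show False
      using assms by (auto simp: pos_roots_def not_le[symmetric])
  qed
  ultimately show ?thesis
    using that by blast
qed

definition stratum_index :: "(nat \<Rightarrow> int) \<Rightarrow> nat" where
  "stratum_index \<beta> = (if mdeg \<beta> = 2 then 3 else mdeg \<beta>)"

lemma stratum_eq:
  "s \<in> {3, 4, 5, 6, 7} \<Longrightarrow> stratum s = {\<beta> \<in> pos_roots. stratum_index \<beta> = s}"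
  by (auto simp: stratum_def stratum_index_def)

lemma mdeg_lattice_vec: "mdeg (lattice_vec l) = Max (set (filter (\<lambda>i. lattice_vec l i \<noteq> 0) [1..<8]))"
proof -
  have "{i \<in> {1..7}. lattice_vec l i \<noteq> 0} = set (filter (\<lambda>i. lattice_vec l i \<noteq> 0) [1..<8])"
    by auto
  then show ?thesis
    by (simp add: mdeg_def)
qed

lemma formV_eq_sum_list: "formV v w = (\<Sum>k\<leftarrow>[0..<3]. formF (v ! k) (w ! k)) mod 2"
  by (simp add: formV_def numeral_3_eq_3 lessThan_Suc add_ac)

lemma agree_exactly_one_iff_length_filter:
  "agree_exactly_one v w \<longleftrightarrow> length (filter (\<lambda>k. v ! k = w ! k) [0..<3]) = 1"
proof -
  have "{k. k < 3 \<and> v ! k = w ! k} = set (filter (\<lambda>k. v ! k = w ! k) [0..<3])"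
    by auto
  then have "card {k. k < 3 \<and> v ! k = w ! k} = length (filter (\<lambda>k. v ! k = w ! k) [0..<3])"
    by (metis distinct_card distinct_filter distinct_upt)
  then show ?thesis
    by (simp add: agree_exactly_one_def)
qed

definition stratum_data :: "nat \<Rightarrow> (int list \<times> nat list) list" where
  "stratum_data s =
     [(l, fmap (lattice_vec l)). l \<leftarrow> E7_pos_root_list, stratum_index (lattice_vec l) = s]"

lemma stratum_in_stratum_data:
  assumes "s \<in> {3, 4, 5, 6, 7}" and "\<beta> \<in> stratum s"
  obtains l where "\<beta> = lattice_vec l" and "(l, fmap \<beta>) \<in> set (stratum_data s)"
proof -
  have pos: "\<beta> \<in> pos_roots" and s: "stratum_index \<beta> = s"
    using assms stratum_eq by auto
  from pos obtain l where "l \<in> set E7_pos_root_list" and "\<beta> = lattice_vec l"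
    by (rule pos_root_in_E7_pos_root_list_up_to_sign)
  with s show ?thesis
    using that by (auto simp: stratum_data_def)
qed

(* The second equivalence reflects that \<langle>\<beta>,\<beta>'\<rangle> \<equiv> (f \<beta>|f \<beta>') mod 2 on all of \<Lambda>, while
   \<langle>\<beta>,\<beta>'\<rangle> \<in> {-1,0,1} for distinct positive roots. *)
lemma stratum_data_pairs:
  "\<forall>s\<in>set [3..<8]. \<forall>(l, v)\<in>set (stratum_data s). \<forall>(l', v')\<in>set (stratum_data s). l \<noteq> l' \<longrightarrow>
     (formV v v' = 0 \<longleftrightarrow> agree_exactly_one v v') \<and> (cartan_form l l' = 0 \<longleftrightarrow> formV v v' = 0)"
  unfolding stratum_data_def stratum_index_def mdeg_lattice_vec formV_eq_sum_list
    agree_exactly_one_iff_length_filter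
  by code_simp

theorem mainTheorem7:
  fixes s :: nat and \<beta> \<beta>' :: "nat \<Rightarrow> int"
  assumes "s \<in> {1, 3, 4, 5, 6, 7}"
    and "\<beta> \<in> stratum s" and "\<beta>' \<in> stratum s" and "\<beta> \<noteq> \<beta>'"
  shows "(formV (fmap \<beta>) (fmap \<beta>') = 0 \<longleftrightarrow> agree_exactly_one (fmap \<beta>) (fmap \<beta>'))
       \<and> (bil \<beta> \<beta>' = 0 \<longleftrightarrow> agree_exactly_one (fmap \<beta>) (fmap \<beta>'))"
proof -
  have "s \<noteq> 1"
    using assms(2-4) by (auto simp: stratum_def)
  then have s: "s \<in> {3, 4, 5, 6, 7}"
    using assms(1) by auto
  obtain l where l: "\<beta> = lattice_vec l" "(l, fmap \<beta>) \<in> set (stratum_data s)"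
    using s assms(2) by (rule stratum_in_stratum_data)
  obtain l' where l': "\<beta>' = lattice_vec l'" "(l', fmap \<beta>') \<in> set (stratum_data s)"
    using s assms(3) by (rule stratum_in_stratum_data)
  have "l \<noteq> l'"
    using assms(4) l l' by auto
  moreover have "bil \<beta> \<beta>' = cartan_form l l'"
    using l l' E7_pos_root_list_length bil_lattice_vec by (auto simp: stratum_data_def)
  moreover have "s \<in> set [3..<8]"
    using s by auto
  ultimately show ?thesis
    using stratum_data_pairs l(2) l'(2) by fastforce
qed

end
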